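(* Let $\mathcal U$ be a non-principal p-point ultrafilter on $\omega$ and $\mathfrak I=\{\omega\setminus X\mid X\in\mathcal U\}$ its dual ideal. If the Grigorieff forcing $\mathbb P(\mathcal U)$ satisfies Axiom A, then player II has a winning strategy in the game $\mathcal G_{\mathcal U}$.
   Context: Grigorieff forcing: $\mathbb P(\mathcal U)=\{p:\omega\to 2\mid \mathrm{dom}(p)\in\mathfrak I\}$ (partial functions), ordered by $q\le p$ iff $q\supseteq p$. A partial order $(\mathbb P,\le)$ satisfies Axiom A if there are partial orders $\le_n$ ($n\in\omega$) on $\mathbb P$ such that: (i) $p\le_0 q$ implies $p\le q$; (ii) $p\le_{n+1}q$ implies $p\le_n q$; (iii) whenever $p_0\ge_0 p_1\ge_1 p_2\ge_2\cdots$, there is $q\in\mathbb P$ with $q\le_n p_n$ for all $n$; (iv) for every $p\in\mathbb P$, $n\in\omega$ and $\mathbb P$-name $\dot\alpha$ for an ordinal, there are $q\le_n p$ and a countable set $B$ with $q\Vdash\dot\alpha\in B$. The game $\mathcal G_{\mathcal U}$: in round $n$ player I plays $I_n\in\mathfrak I$ and player II responds with a finite $F_n\subseteq I_n$; player I's moves must form a partition $\{I_n\mid n\in\omega\}$ of $\omega$; player II wins iff $\bigcup_n F_n\in\mathcal U$. A p-point ultrafilter is a non-principal ultrafilter $\mathcal U$ on $\omega$ such that for every partition $\{J_n\}$ of $\omega$ with each $J_n\notin\mathcal U$ there is $Y\in\mathcal U$ with $|Y\cap J_n|<\omega$ for all $n$. *)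

theory Defs
  imports Main "HOL-Library.Countable_Set"
begin

definition ultrafilter_on_nat :: "nat set set \<Rightarrow> bool" where
  "ultrafilter_on_nat U \<longleftrightarrow>
     UNIV \<in> U \<and> {} \<notin> U \<and>
     (\<forall>X Y. X \<in> U \<and> X \<subseteq> Y \<longrightarrow> Y \<in> U) \<and>
     (\<forall>X Y. X \<in> U \<and> Y \<in> U \<longrightarrow> X \<inter> Y \<in> U) \<and>
     (\<forall>X. X \<in> U \<or> - X \<in> U)"

definition nonprincipal :: "nat set set \<Rightarrow> bool" where
  "nonprincipal U \<longleftrightarrow> (\<forall>x. {x} \<notin> U)"

text \<open>An indexed partition of omega (pieces may be empty).\<close>
definition is_partition :: "(nat \<Rightarrow> nat set) \<Rightarrow> bool" where
  "is_partition J \<longleftrightarrow> (\<forall>m n. m \<noteq> n \<longrightarrow> J m \<inter> J n = {}) \<and> (\<Union>n. J n) = UNIV"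

definition p_point :: "nat set set \<Rightarrow> bool" where
  "p_point U \<longleftrightarrow> ultrafilter_on_nat U \<and> nonprincipal U \<and>
     (\<forall>J. is_partition J \<and> (\<forall>n. J n \<notin> U) \<longrightarrow>
        (\<exists>Y\<in>U. \<forall>n. finite (Y \<inter> J n)))"

definition dual_ideal :: "nat set set \<Rightarrow> nat set set" where
  "dual_ideal U = {- X | X. X \<in> U}"

definition grigorieff :: "nat set set \<Rightarrow> (nat \<rightharpoonup> bool) set" where
  "grigorieff U = {p. dom p \<in> dual_ideal U}"

definition grig_le :: "(nat \<rightharpoonup> bool) \<Rightarrow> (nat \<rightharpoonup> bool) \<Rightarrow> bool" where
  "grig_le q p \<longleftrightarrow> p \<subseteq>\<^sub>m q"

definition partial_order_on_set :: "'p set \<Rightarrow> ('p \<Rightarrow> 'p \<Rightarrow> bool) \<Rightarrow> bool" where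
  "partial_order_on_set P r \<longleftrightarrow>
     (\<forall>p\<in>P. r p p) \<and>
     (\<forall>p\<in>P. \<forall>q\<in>P. r p q \<and> r q p \<longrightarrow> p = q) \<and>
     (\<forall>p\<in>P. \<forall>q\<in>P. \<forall>s\<in>P. r p q \<and> r q s \<longrightarrow> r p s)"

definition compatible :: "'p set \<Rightarrow> ('p \<Rightarrow> 'p \<Rightarrow> bool) \<Rightarrow> 'p \<Rightarrow> 'p \<Rightarrow> bool" where
  "compatible P le a b \<longleftrightarrow> (\<exists>r\<in>P. le r a \<and> le r b)"

definition maximal_antichain :: "'p set \<Rightarrow> ('p \<Rightarrow> 'p \<Rightarrow> bool) \<Rightarrow> 'p set \<Rightarrow> bool" where
  "maximal_antichain P le A \<longleftrightarrow> A \<subseteq> P \<and>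
     (\<forall>a\<in>A. \<forall>b\<in>A. a \<noteq> b \<longrightarrow> \<not> compatible P le a b) \<and>
     (\<forall>p\<in>P. \<exists>a\<in>A. compatible P le p a)"

text \<open>A (nice) name for an ordinal: a maximal antichain A together with the values
  f a decided by its members.  Values are taken in the type of conditions, which is
  large enough to separate all members of any antichain.\<close>
definition ordinal_name :: "'p set \<Rightarrow> ('p \<Rightarrow> 'p \<Rightarrow> bool) \<Rightarrow> 'p set \<Rightarrow> ('p \<Rightarrow> 'v) \<Rightarrow> bool" where
  "ordinal_name P le A f \<longleftrightarrow> maximal_antichain P le A"

definition forces_in :: "'p set \<Rightarrow> ('p \<Rightarrow> 'p \<Rightarrow> bool) \<Rightarrow> 'p \<Rightarrow> 'p set \<Rightarrow> ('p \<Rightarrow> 'v) \<Rightarrow> 'v set \<Rightarrow> bool" where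
  "forces_in P le q A f B \<longleftrightarrow>
     (\<forall>r\<in>P. le r q \<longrightarrow> (\<exists>s\<in>P. le s r \<and> (\<exists>a\<in>A. le s a \<and> f a \<in> B)))"

definition axiom_A :: "'p set \<Rightarrow> ('p \<Rightarrow> 'p \<Rightarrow> bool) \<Rightarrow> bool" where
  "axiom_A P le \<longleftrightarrow> (\<exists>len :: nat \<Rightarrow> 'p \<Rightarrow> 'p \<Rightarrow> bool.
     (\<forall>n. partial_order_on_set P (len n)) \<and>
     (\<forall>p\<in>P. \<forall>q\<in>P. len 0 p q \<longrightarrow> le p q) \<and>
     (\<forall>n. \<forall>p\<in>P. \<forall>q\<in>P. len (Suc n) p q \<longrightarrow> len n p q) \<and>
     (\<forall>s. (\<forall>n. s n \<in> P \<and> len n (s (Suc n)) (s n)) \<longrightarrow>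
          (\<exists>q\<in>P. \<forall>n. len n q (s n))) \<and>
     (\<forall>p\<in>P. \<forall>n. \<forall>A (f :: 'p \<Rightarrow> 'p). ordinal_name P le A f \<longrightarrow>
          (\<exists>q\<in>P. len n q p \<and> (\<exists>B. countable B \<and> forces_in P le q A f B))))"

text \<open>A strategy for II maps the history of I's moves (I_0,...,I_n) to F_n,
  a finite subset of I_n.\<close>
definition strategy_II :: "(nat set list \<Rightarrow> nat set) \<Rightarrow> bool" where
  "strategy_II \<sigma> \<longleftrightarrow> (\<forall>xs. xs \<noteq> [] \<longrightarrow> finite (\<sigma> xs) \<and> \<sigma> xs \<subseteq> last xs)"

definition winning_II :: "nat set set \<Rightarrow> (nat set list \<Rightarrow> nat set) \<Rightarrow> bool" where
  "winning_II U \<sigma> \<longleftrightarrow> strategy_II \<sigma> \<and>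
     (\<forall>I :: nat \<Rightarrow> nat set. (\<forall>n. I n \<in> dual_ideal U) \<and> is_partition I \<longrightarrow>
        (\<Union>n. \<sigma> (map I [0..<Suc n])) \<in> U)"

end

theory Submission
  imports Defs
begin

text \<open>
  Let \<open>\<le>\<^sub>n\<close> be the orderings of Axiom A. The conditions whose domain is exactly
  a set \<open>I \<in> \<I>\<close> form a maximal antichain, i.e. a name for the restriction of the
  generic function to \<open>I\<close>. A condition \<open>q\<close> forcing this name into a countable set
  must have decided all but finitely many points of \<open>I\<close>: otherwise each of the
  uncountably many subsets of the undecided part could be forced by an extension
  of \<open>q\<close>. So from \<open>q\<^sub>n\<close> and player I's move \<open>I\<^sub>n\<close>, Axiom A (iv) yields
  \<open>q\<^sub>n\<^sub>+\<^sub>1 \<le>\<^sub>n q\<^sub>n\<close> with \<open>I\<^sub>n - dom q\<^sub>n\<^sub>+\<^sub>1\<close> finite, and player II answers with this set.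
  A fusion \<open>q\<close> of the \<open>q\<^sub>n\<close> extends all of them, so the set \<open>\<omega> - dom q \<in> \<U>\<close> is
  covered by II's answers.

  The p-point hypothesis enters only through \<open>\<U>\<close> being an ultrafilter.
\<close>

type_synonym condition = "nat \<rightharpoonup> bool"

lemma uncountable_Pow:
  assumes "infinite D"
  shows "uncountable (Pow D)"
proof
  assume countable_Pow: "countable (Pow D)"
  have "(\<lambda>x. {x}) ` D \<subseteq> Pow D" by auto
  then have "countable ((\<lambda>x. {x}) ` D)"
    using countable_Pow countable_subset by blast
  then have "countable D"
    by (rule countable_image_inj_on) (simp add: inj_on_def)
  then obtain g :: "nat \<Rightarrow> _" where "bij_betw g UNIV D"
    using assms countable_infiniteE' by blast
  then have "inv_into UNIV g ` D = UNIV"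
    by (meson bij_betw_def bij_betw_inv_into)
  moreover have "range (from_nat_into (Pow D)) = Pow D"
    using countable_Pow by (intro range_from_nat_into) auto
  ultimately have "from_nat_into (Pow D) ` inv_into UNIV g ` D = Pow D"
    by simp
  then show False
    using Cantors_theorem by (metis image_comp)
qed

lemma dual_ideal_Un:
  assumes "ultrafilter_on_nat U" "A \<in> dual_ideal U" "B \<in> dual_ideal U"
  shows "A \<union> B \<in> dual_ideal U"
proof -
  obtain X Y where "A = - X" "B = - Y" "X \<in> U" "Y \<in> U"
    using assms(2,3) unfolding dual_ideal_def by auto
  then have "A \<union> B = - (X \<inter> Y)" "X \<inter> Y \<in> U"
    using assms(1) unfolding ultrafilter_on_nat_def by blast+
  then show ?thesis
    unfolding dual_ideal_def by blast
qed

lemma dual_ideal_subset: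
  assumes "ultrafilter_on_nat U" "A \<in> dual_ideal U" "B \<subseteq> A"
  shows "B \<in> dual_ideal U"
proof -
  obtain X where "A = - X" "X \<in> U"
    using assms(2) unfolding dual_ideal_def by auto
  moreover from this have "X \<subseteq> - B"
    using assms(3) by auto
  ultimately have "- B \<in> U"
    using assms(1) unfolding ultrafilter_on_nat_def by blast
  moreover have "B = - (- B)"
    by simp
  ultimately show ?thesis
    unfolding dual_ideal_def by blast
qed

lemma empty_in_grigorieff:
  assumes "ultrafilter_on_nat U"
  shows "Map.empty \<in> grigorieff U"
proof -
  have "- UNIV \<in> dual_ideal U"
    using assms unfolding ultrafilter_on_nat_def dual_ideal_def by blast
  then show ?thesis
    unfolding grigorieff_def by simp
qed

lemma maximal_antichain_dom_eq:
  assumes uf: "ultrafilter_on_nat U" and I: "I \<in> dual_ideal U"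
  shows "maximal_antichain (grigorieff U) grig_le {r. dom r = I}"
  unfolding maximal_antichain_def
proof (intro conjI ballI impI)
  show "{r. dom r = I} \<subseteq> grigorieff U"
    using I unfolding grigorieff_def by auto
next
  fix a b :: condition
  assume ab: "a \<in> {r. dom r = I}" "b \<in> {r. dom r = I}" "a \<noteq> b"
  show "\<not> compatible (grigorieff U) grig_le a b"
  proof
    assume "compatible (grigorieff U) grig_le a b"
    then obtain r where "a \<subseteq>\<^sub>m r" "b \<subseteq>\<^sub>m r"
      unfolding compatible_def grig_le_def by blast
    with ab(1,2) have "a \<subseteq>\<^sub>m b" "b \<subseteq>\<^sub>m a"
      unfolding map_le_def by auto
    with ab(3) show False
      using map_le_antisym by blast
  qed
next
  fix p
  assume p: "p \<in> grigorieff U"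
  define r where "r = (\<lambda>x. if x \<in> I then Some (p x \<noteq> Some False) else None)"
  have dom_r: "dom r = I"
    unfolding r_def by (auto split: if_splits)
  have "r \<subseteq>\<^sub>m r ++ p"
    unfolding map_le_def
  proof
    fix x
    assume "x \<in> dom r"
    then show "r x = (r ++ p) x"
      using dom_r by (cases "p x") (auto simp: r_def map_add_def)
  qed
  moreover have "p \<subseteq>\<^sub>m r ++ p"
    by (rule map_le_map_add)
  moreover have "r ++ p \<in> grigorieff U"
    using dual_ideal_Un[OF uf _ I] p dom_r unfolding grigorieff_def by simp
  ultimately have "compatible (grigorieff U) grig_le p r"
    unfolding compatible_def grig_le_def by blast
  with dom_r show "\<exists>a\<in>{r. dom r = I}. compatible (grigorieff U) grig_le p a"
    by blast
qed

text \<open>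
  A member of the antichain lying below an extension of \<open>q\<close> codes, on the points
  of \<open>I\<close> undecided by \<open>q\<close>, whatever subset that extension has set to \<open>True\<close> there.
\<close>

lemma forces_countable_imp_finite_undecided:
  assumes uf: "ultrafilter_on_nat U" and I: "I \<in> dual_ideal U"
    and q: "q \<in> grigorieff U" and "countable B"
    and forces: "forces_in (grigorieff U) grig_le q {r. dom r = I} id B"
  shows "finite (I - dom q)"
proof (rule ccontr)
  define D where "D = I - dom q"
  assume "infinite (I - dom q)"
  then have "uncountable (Pow D)"
    unfolding D_def by (rule uncountable_Pow)
  moreover have "Pow D \<subseteq> (\<lambda>a. {x \<in> D. a x = Some True}) ` B"
  proof
    fix S
    assume "S \<in> Pow D"
    define r where "r = q ++ (\<lambda>x. if x \<in> D then Some (x \<in> S) else None)"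
    have "dom r \<subseteq> dom q \<union> I"
      unfolding r_def D_def by auto
    moreover have "dom q \<union> I \<in> dual_ideal U"
      using dual_ideal_Un[OF uf _ I] q unfolding grigorieff_def by simp
    ultimately have "r \<in> grigorieff U"
      using dual_ideal_subset[OF uf] unfolding grigorieff_def by blast
    moreover have "q \<subseteq>\<^sub>m r"
      unfolding r_def D_def map_le_def map_add_def by (auto split: option.splits)
    ultimately obtain s a where s: "r \<subseteq>\<^sub>m s" "dom a = I" "a \<subseteq>\<^sub>m s" "a \<in> B"
      using forces unfolding forces_in_def grig_le_def by auto
    have "a x = Some (x \<in> S)" if "x \<in> D" for x
    proof -
      have "r x = Some (x \<in> S)"
        using that unfolding r_def by simp
      moreover have "x \<in> dom a"
        using that s(2) unfolding D_def by simp
      ultimately show ?thesis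
        using s(1,3) unfolding map_le_def by (metis domI)
    qed
    then have "{x \<in> D. a x = Some True} = S"
      using \<open>S \<in> Pow D\<close> by auto
    with s(4) show "S \<in> (\<lambda>a. {x \<in> D. a x = Some True}) ` B"
      by blast
  qed
  moreover have "countable ((\<lambda>a. {x \<in> D. a x = Some True}) ` B)"
    using \<open>countable B\<close> by (rule countable_image)
  ultimately show False
    using countable_subset by blast
qed

lemma ex_condition_cofinite_on:
  assumes uf: "ultrafilter_on_nat U" and I: "I \<in> dual_ideal U"
    and decide: "\<And>A (f :: condition \<Rightarrow> condition). ordinal_name (grigorieff U) grig_le A f \<Longrightarrow>
      \<exists>q\<in>grigorieff U. R q \<and> (\<exists>B. countable B \<and> forces_in (grigorieff U) grig_le q A f B)"
  shows "\<exists>q\<in>grigorieff U. R q \<and> finite (I - dom q)"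
proof -
  have "ordinal_name (grigorieff U) grig_le {r. dom r = I} id"
    unfolding ordinal_name_def using maximal_antichain_dom_eq[OF uf I] .
  then obtain q B where "q \<in> grigorieff U" "R q" "countable B"
      "forces_in (grigorieff U) grig_le q {r. dom r = I} id B"
    using decide by blast
  then show ?thesis
    using forces_countable_imp_finite_undecided[OF uf I] by blast
qed

text \<open>
  The finiteness test in \<open>fusion_strategy\<close> only matters on histories that are not
  legal plays; it makes the answer a finite set on every history.
\<close>

primrec fusion_seq ::
  "(nat \<Rightarrow> condition \<Rightarrow> nat set \<Rightarrow> condition) \<Rightarrow> (nat \<Rightarrow> nat set) \<Rightarrow> nat \<Rightarrow> condition"
where
  "fusion_seq step I 0 = Map.empty"
| "fusion_seq step I (Suc k) = step k (fusion_seq step I k) (I k)"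

definition fusion_strategy ::
  "(nat \<Rightarrow> condition \<Rightarrow> nat set \<Rightarrow> condition) \<Rightarrow> nat set list \<Rightarrow> nat set"
where
  "fusion_strategy step xs =
     (let F = last xs - dom (fusion_seq step (nth xs) (length xs)) in if finite F then F else {})"

lemma fusion_seq_cong:
  "(\<And>k. k < n \<Longrightarrow> I k = I' k) \<Longrightarrow> fusion_seq step I n = fusion_seq step I' n"
  by (induction n) auto

lemma strategy_II_fusion_strategy: "strategy_II (fusion_strategy step)"
  unfolding strategy_II_def fusion_strategy_def Let_def by auto

lemma fusion_strategy_play:
  assumes "finite (I n - dom (fusion_seq step I (Suc n)))"
  shows "fusion_strategy step (map I [0..<Suc n]) = I n - dom (fusion_seq step I (Suc n))"
proof -
  have "fusion_seq step (nth (map I [0..<Suc n])) (Suc n) = fusion_seq step I (Suc n)"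
    by (rule fusion_seq_cong) (simp del: upt_Suc)
  moreover have "last (map I [0..<Suc n]) = I n"
    by simp
  ultimately show ?thesis
    using assms unfolding fusion_strategy_def Let_def by (simp del: upt_Suc)
qed

lemma winning_II_fusion_strategy:
  fixes len :: "nat \<Rightarrow> condition \<Rightarrow> condition \<Rightarrow> bool"
  assumes uf: "ultrafilter_on_nat U"
    and len_le: "\<And>n p q. p \<in> grigorieff U \<Longrightarrow> q \<in> grigorieff U \<Longrightarrow> len n p q \<Longrightarrow> grig_le p q"
    and fusion: "\<And>s. \<forall>n. s n \<in> grigorieff U \<and> len n (s (Suc n)) (s n) \<Longrightarrow>
      \<exists>q\<in>grigorieff U. \<forall>n. len n q (s n)"
    and step: "\<And>k p I. p \<in> grigorieff U \<Longrightarrow> I \<in> dual_ideal U \<Longrightarrow>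
      step k p I \<in> grigorieff U \<and> len k (step k p I) p \<and> finite (I - dom (step k p I))"
  shows "winning_II U (fusion_strategy step)"
  unfolding winning_II_def
proof (intro conjI allI impI strategy_II_fusion_strategy)
  fix I :: "nat \<Rightarrow> nat set"
  assume play: "(\<forall>n. I n \<in> dual_ideal U) \<and> is_partition I"
  define s where "s = fusion_seq step I"
  have s: "s n \<in> grigorieff U \<and> len n (s (Suc n)) (s n) \<and> finite (I n - dom (s (Suc n)))" for n
    by (induction n) (use step play empty_in_grigorieff[OF uf] in \<open>simp_all add: s_def\<close>)
  then obtain q where q: "q \<in> grigorieff U" "\<And>n. len n q (s n)"
    using fusion by blast
  have dom_s: "dom (s n) \<subseteq> dom q" for n
    using len_le[OF q(1) _ q(2)] s unfolding grig_le_def by (simp add: map_le_implies_dom_le)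
  obtain X where X: "dom q = - X" "X \<in> U"
    using q(1) unfolding grigorieff_def dual_ideal_def by auto
  have "X \<subseteq> (\<Union>n. fusion_strategy step (map I [0..<Suc n]))"
  proof
    fix x
    assume "x \<in> X"
    moreover obtain n where "x \<in> I n"
      using play unfolding is_partition_def by blast
    ultimately have "x \<in> I n - dom (s (Suc n))"
      using X(1) dom_s by blast
    then show "x \<in> (\<Union>n. fusion_strategy step (map I [0..<Suc n]))"
      using fusion_strategy_play s unfolding s_def by blast
  qed
  with X(2) uf show "(\<Union>n. fusion_strategy step (map I [0..<Suc n])) \<in> U"
    unfolding ultrafilter_on_nat_def by blast
qed

theorem lemma1:
  fixes U :: "nat set set"
  assumes "p_point U"
    and "axiom_A (grigorieff U) grig_le"
  shows "\<exists>\<sigma>. winning_II U \<sigma>"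
proof -
  let ?P = "grigorieff U"
  have uf: "ultrafilter_on_nat U"
    using assms(1) unfolding p_point_def by simp
  obtain len :: "nat \<Rightarrow> condition \<Rightarrow> condition \<Rightarrow> bool" where
    len_0: "\<forall>p\<in>?P. \<forall>q\<in>?P. len 0 p q \<longrightarrow> grig_le p q" and
    len_Suc: "\<forall>n. \<forall>p\<in>?P. \<forall>q\<in>?P. len (Suc n) p q \<longrightarrow> len n p q" and
    fusion: "\<forall>s. (\<forall>n. s n \<in> ?P \<and> len n (s (Suc n)) (s n)) \<longrightarrow> (\<exists>q\<in>?P. \<forall>n. len n q (s n))" and
    decide: "\<forall>p\<in>?P. \<forall>n. \<forall>A (f :: condition \<Rightarrow> condition). ordinal_name ?P grig_le A f \<longrightarrow>
      (\<exists>q\<in>?P. len n q p \<and> (\<exists>B. countable B \<and> forces_in ?P grig_le q A f B))"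
    using assms(2) unfolding axiom_A_def by blast
  have len_le: "grig_le p q" if "p \<in> ?P" "q \<in> ?P" "len n p q" for n p q
    using that by (induction n) (use len_0 len_Suc in blast)+
  have ex_step: "\<exists>q\<in>?P. len k q p \<and> finite (I - dom q)" if "p \<in> ?P" "I \<in> dual_ideal U" for k p I
    by (rule ex_condition_cofinite_on[OF uf]) (use that decide in blast)+
  define step where "step k p I = (SOME q. q \<in> ?P \<and> len k q p \<and> finite (I - dom q))" for k p I
  have step: "step k p I \<in> ?P \<and> len k (step k p I) p \<and> finite (I - dom (step k p I))"
    if "p \<in> ?P" "I \<in> dual_ideal U" for k p I
    using ex_step[OF that] unfolding step_def Bex_def by (rule someI_ex)
  have "winning_II U (fusion_strategy step)"
    by (rule winning_II_fusion_strategy[OF uf len_le fusion[THEN spec, THEN mp] step])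
  then show ?thesis
    by blast
qed

end
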